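(* Let $\mathbf{F}_x,\mathbf{F}_y\in\mathbb{R}^{N\times N}$ be symmetric and negative semi-definite, and let $\Delta t>0$ be arbitrary. Let $\mathbf{U}^n=\mathbf{V}^{x,n}\mathbf{S}^n(\mathbf{V}^{y,n})^T$ with $\mathbf{V}^{x,n},\mathbf{V}^{y,n}\in\mathbb{R}^{N\times r^n}$ having orthonormal columns, and let $\mathbf{U}^{n+1}=\mathbf{V}^{x,n+1}\mathbf{S}^{n+1}(\mathbf{V}^{y,n+1})^T$ be produced from $\mathbf{U}^n$ by one step of the first-order RAIL scheme (described in the context) for the matrix differential equation $\frac{d\mathbf{U}}{dt}=\mathbf{F}_x\mathbf{U}+\mathbf{U}\mathbf{F}_y^T$. Then $\|\mathbf{U}^{n+1}\|_F\le\|\mathbf{U}^n\|_F$, i.e. the first-order RAIL scheme (based on backward Euler) is unconditionally stable in $L^2$ (equivalently, in the Frobenius norm of the solution matrix).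
   Context: The first-order RAIL (Reduced Augmentation Implicit Low-rank) scheme, based on the backward Euler discretization $\mathbf{U}^{n+1}=\mathbf{U}^n+\Delta t(\mathbf{F}_x\mathbf{U}^{n+1}+\mathbf{U}^{n+1}\mathbf{F}_y^T)$, computes $\mathbf{U}^{n+1}$ from $\mathbf{U}^n=\mathbf{V}^{x,n}\mathbf{S}^n(\mathbf{V}^{y,n})^T$ as follows. (1) K and L steps: solve the Sylvester equations $(\mathbf{I}-\Delta t\mathbf{F}_x)\mathbf{K}-\mathbf{K}\big(\Delta t(\mathbf{F}_y\mathbf{V}^{y,n})^T\mathbf{V}^{y,n}\big)=\mathbf{V}^{x,n}\mathbf{S}^n$ and $(\mathbf{I}-\Delta t\mathbf{F}_y)\mathbf{L}-\mathbf{L}\big(\Delta t(\mathbf{F}_x\mathbf{V}^{x,n})^T\mathbf{V}^{x,n}\big)=\mathbf{V}^{y,n}(\mathbf{S}^n)^T$ for $\mathbf{K},\mathbf{L}\in\mathbb{R}^{N\times r^n}$, and let $\mathbf{V}^{x}_{\ddagger},\mathbf{V}^{y}_{\ddagger}$ be the orthonormal factors of reduced QR factorizations $\mathbf{K}=\mathbf{V}^{x}_{\ddagger}\mathbf{R}$, $\mathbf{L}=\mathbf{V}^{y}_{\ddagger}\mathbf{R}'$. (2) Reduced augmentation: compute reduced QR factorizations $[\mathbf{V}^{x}_{\ddagger},\mathbf{V}^{x,n}]=\mathbf{Q}_x\mathbf{R}_x$ and $[\mathbf{V}^{y}_{\ddagger},\mathbf{V}^{y,n}]=\mathbf{Q}_y\mathbf{R}_y$;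 let $\hat r$ be the maximum of the numbers of singular values of $\mathbf{R}_x$ and of $\mathbf{R}_y$ exceeding $10^{-12}$; set $\hat{\mathbf{V}}^{x}=\mathbf{Q}_x$ times the first $\hat r$ left singular vectors of $\mathbf{R}_x$, and $\hat{\mathbf{V}}^{y}=\mathbf{Q}_y$ times the first $\hat r$ left singular vectors of $\mathbf{R}_y$ (both have orthonormal columns). (3) S step (Galerkin projection): solve the Sylvester equation $\big(\mathbf{I}-\Delta t(\hat{\mathbf{V}}^{x})^T\mathbf{F}_x\hat{\mathbf{V}}^{x}\big)\hat{\mathbf{S}}-\hat{\mathbf{S}}\big(\Delta t(\mathbf{F}_y\hat{\mathbf{V}}^{y})^T\hat{\mathbf{V}}^{y}\big)=(\hat{\mathbf{V}}^{x})^T\mathbf{V}^{x,n}\mathbf{S}^n(\mathbf{V}^{y,n})^T\hat{\mathbf{V}}^{y}$ for $\hat{\mathbf{S}}\in\mathbb{R}^{\hat r\times\hat r}$. (4) Truncation: compute the SVD $\hat{\mathbf{S}}=\mathbf{A}\boldsymbol{\Sigma}\mathbf{B}^T$, let $r^{n+1}$ be the number of singular values larger than a tolerance $\epsilon>0$, and set $\mathbf{V}^{x,n+1}=\hat{\mathbf{V}}^{x}\mathbf{A}(:,1\!:\!r^{n+1})$, $\mathbf{S}^{n+1}=\boldsymbol{\Sigma}(1\!:\!r^{n+1},1\!:\!r^{n+1})$, $\mathbf{V}^{y,n+1}=\hat{\mathbf{V}}^{y}\mathbf{B}(:,1\!:\!r^{n+1})$. Here $\|\cdot\|_F$ is the Frobenius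 norm. *)

theory Defs
  imports Complex_Main "Jordan_Normal_Form.Matrix"
begin

text \<open>Real matrices are represented by the Jordan_Normal_Form type 'real mat'
  (dimensions carried by the value, so the varying ranks r^n, r-hat, r^(n+1) are unproblematic).\<close>

definition symmetric_mat :: "real mat \<Rightarrow> bool" where
  "symmetric_mat A \<longleftrightarrow> A\<^sup>T = A"

definition neg_semidef :: "nat \<Rightarrow> real mat \<Rightarrow> bool" where
  "neg_semidef n A \<longleftrightarrow> A \<in> carrier_mat n n \<and>
     (\<forall>v \<in> carrier_vec n. v \<bullet> (A *\<^sub>v v) \<le> 0)"

definition orthonormal_cols :: "nat \<Rightarrow> nat \<Rightarrow> real mat \<Rightarrow> bool" where
  "orthonormal_cols n m A \<longleftrightarrow> A \<in> carrier_mat n m \<and> A\<^sup>T * A = 1\<^sub>m m"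

definition frob_norm :: "real mat \<Rightarrow> real" where
  "frob_norm A = sqrt (\<Sum>i<dim_row A. \<Sum>j<dim_col A. (A $$ (i,j))\<^sup>2)"

definition append_cols :: "real mat \<Rightarrow> real mat \<Rightarrow> real mat" where
  "append_cols A B = mat (dim_row A) (dim_col A + dim_col B)
     (\<lambda>(i,j). if j < dim_col A then A $$ (i,j) else B $$ (i, j - dim_col A))"

definition first_cols :: "nat \<Rightarrow> real mat \<Rightarrow> real mat" where
  "first_cols k A = mat (dim_row A) k (\<lambda>(i,j). A $$ (i,j))"

definition lead_block :: "nat \<Rightarrow> real mat \<Rightarrow> real mat" where
  "lead_block k A = mat k k (\<lambda>(i,j). A $$ (i,j))"

definition reduced_qr :: "real mat \<Rightarrow> real mat \<Rightarrow> real mat \<Rightarrow> bool" where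
  "reduced_qr A Q R \<longleftrightarrow>
     (let n = dim_row A; m = dim_col A; k = min n m in
       orthonormal_cols n k Q \<and> R \<in> carrier_mat k m \<and> upper_triangular R \<and> A = Q * R)"

definition is_svd :: "real mat \<Rightarrow> real mat \<Rightarrow> real mat \<Rightarrow> real mat \<Rightarrow> bool" where
  "is_svd A P Sig W \<longleftrightarrow>
     (let n = dim_row A; m = dim_col A in
       orthonormal_cols n n P \<and> orthonormal_cols m m W \<and> Sig \<in> carrier_mat n m \<and>
       (\<forall>i<n. \<forall>j<m. i \<noteq> j \<longrightarrow> Sig $$ (i,j) = 0) \<and>
       (\<forall>i<min n m. 0 \<le> Sig $$ (i,i)) \<and>
       (\<forall>i j. i \<le> j \<longrightarrow> j < min n m \<longrightarrow> Sig $$ (j,j) \<le> Sig $$ (i,i)) \<and>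
       A = P * Sig * W\<^sup>T)"

definition num_sv_above :: "real \<Rightarrow> real mat \<Rightarrow> nat" where
  "num_sv_above tau Sig = card {i. i < min (dim_row Sig) (dim_col Sig) \<and> Sig $$ (i,i) > tau}"

end

theory Submission
  imports Defs
begin

text \<open>The K and L steps only choose the bases; stability comes from the S step, which is
  backward Euler Galerkin-projected onto orthonormal bases \<open>V\<^sub>x\<close>, \<open>V\<^sub>y\<close>. The projected operators
  \<open>V\<^sub>x\<^sup>T F\<^sub>x V\<^sub>x\<close>, \<open>V\<^sub>y\<^sup>T F\<^sub>y V\<^sub>y\<close> are still negative semidefinite, so pairing the S equation with
  \<open>S\<close> gives \<open>\<parallel>S\<parallel>\<^sup>2 \<le> \<langle>S, V\<^sub>x\<^sup>T U V\<^sub>y\<rangle>\<close>, whence \<open>\<parallel>S\<parallel> \<le> \<parallel>V\<^sub>x\<^sup>T U V\<^sub>y\<parallel> \<le> \<parallel>U\<parallel>\<close> because orthogonal projections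
  contract the Frobenius norm. Truncating the SVD of \<open>S\<close> only drops singular values, and
  multiplying by matrices with orthonormal columns preserves the norm.\<close>

definition frob_inner :: "real mat \<Rightarrow> real mat \<Rightarrow> real" where
  "frob_inner X Y = (\<Sum>i<dim_row X. \<Sum>j<dim_col X. X $$ (i,j) * Y $$ (i,j))"

lemma frob_norm_eq_sqrt_frob_inner: "frob_norm X = sqrt (frob_inner X X)"
  unfolding frob_norm_def frob_inner_def by (simp add: power2_eq_square)

lemma frob_inner_self_nonneg: "frob_inner X X \<ge> 0"
  unfolding frob_inner_def by (intro sum_nonneg) auto

lemma frob_inner_commute:
  assumes "X \<in> carrier_mat n m" "Y \<in> carrier_mat n m"
  shows "frob_inner X Y = frob_inner Y X"
  using assms unfolding frob_inner_def by (simp add: mult.commute)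

lemma frob_inner_transpose:
  assumes "X \<in> carrier_mat n m" "Y \<in> carrier_mat n m"
  shows "frob_inner X\<^sup>T Y\<^sup>T = frob_inner X Y"
  using assms unfolding frob_inner_def by (simp, subst sum.swap, simp)

lemma frob_inner_add_left:
  assumes "X \<in> carrier_mat n m" "Y \<in> carrier_mat n m" "Z \<in> carrier_mat n m"
  shows "frob_inner (Y + Z) X = frob_inner Y X + frob_inner Z X"
  using assms unfolding frob_inner_def by (simp add: algebra_simps sum.distrib)

lemma frob_inner_add_right:
  assumes "X \<in> carrier_mat n m" "Y \<in> carrier_mat n m" "Z \<in> carrier_mat n m"
  shows "frob_inner X (Y + Z) = frob_inner X Y + frob_inner X Z"
  using assms unfolding frob_inner_def by (simp add: algebra_simps sum.distrib)

lemma frob_inner_minus_left: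
  assumes "X \<in> carrier_mat n m" "Y \<in> carrier_mat n m" "Z \<in> carrier_mat n m"
  shows "frob_inner (Y - Z) X = frob_inner Y X - frob_inner Z X"
  using assms unfolding frob_inner_def by (simp add: algebra_simps sum_subtractf)

lemma frob_inner_minus_right:
  assumes "X \<in> carrier_mat n m" "Y \<in> carrier_mat n m" "Z \<in> carrier_mat n m"
  shows "frob_inner X (Y - Z) = frob_inner X Y - frob_inner X Z"
  using assms unfolding frob_inner_def by (simp add: algebra_simps sum_subtractf)

lemma frob_inner_smult_right:
  assumes "X \<in> carrier_mat n m" "Y \<in> carrier_mat n m"
  shows "frob_inner X (c \<cdot>\<^sub>m Y) = c * frob_inner X Y"
  using assms unfolding frob_inner_def by (simp add: algebra_simps sum_distrib_left)

lemma frob_inner_zero_right: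
  assumes "X \<in> carrier_mat n m"
  shows "frob_inner X (0\<^sub>m n m) = 0"
  using assms unfolding frob_inner_def by simp

lemma frob_inner_eq_sum_col:
  assumes "X \<in> carrier_mat n m" "Y \<in> carrier_mat n m"
  shows "frob_inner X Y = (\<Sum>j<m. col X j \<bullet> col Y j)"
  using assms unfolding frob_inner_def scalar_prod_def
  by (simp add: atLeast0LessThan, subst sum.swap, simp)

lemma frob_inner_mult_left:
  assumes A: "A \<in> carrier_mat n k" and B: "B \<in> carrier_mat k m" and C: "C \<in> carrier_mat n m"
  shows "frob_inner (A * B) C = frob_inner B (A\<^sup>T * C)"
proof -
  have "frob_inner (A * B) C = (\<Sum>i<n. \<Sum>j<m. \<Sum>l<k. A $$ (i,l) * B $$ (l,j) * C $$ (i,j))"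
    using A B C unfolding frob_inner_def
    by (simp add: scalar_prod_def sum_distrib_right atLeast0LessThan)
  also have "\<dots> = (\<Sum>l<k. \<Sum>j<m. \<Sum>i<n. A $$ (i,l) * B $$ (l,j) * C $$ (i,j))"
    by (subst sum.swap, subst sum.swap, rule sum.cong, simp, subst sum.swap, simp)
  also have "\<dots> = frob_inner B (A\<^sup>T * C)"
    using A B C unfolding frob_inner_def
    by (simp add: scalar_prod_def sum_distrib_left atLeast0LessThan mult_ac)
  finally show ?thesis .
qed

lemma frob_inner_mult_right:
  assumes A: "A \<in> carrier_mat m k" and B: "B \<in> carrier_mat n m" and C: "C \<in> carrier_mat n k"
  shows "frob_inner (B * A) C = frob_inner B (C * A\<^sup>T)"
proof -
  have "frob_inner (B * A) C = (\<Sum>i<n. \<Sum>j<k. \<Sum>l<m. B $$ (i,l) * A $$ (l,j) * C $$ (i,j))"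
    using A B C unfolding frob_inner_def
    by (simp add: scalar_prod_def sum_distrib_right atLeast0LessThan)
  also have "\<dots> = (\<Sum>i<n. \<Sum>l<m. \<Sum>j<k. B $$ (i,l) * A $$ (l,j) * C $$ (i,j))"
    by (rule sum.cong, simp, subst sum.swap, simp)
  also have "\<dots> = frob_inner B (C * A\<^sup>T)"
    using A B C unfolding frob_inner_def
    by (simp add: scalar_prod_def sum_distrib_left atLeast0LessThan mult_ac)
  finally show ?thesis .
qed

lemma frob_inner_self_le_of_orthogonal_diff:
  assumes P: "P \<in> carrier_mat n m" and M: "M \<in> carrier_mat n m"
    and orth: "frob_inner P (M - P) = 0"
  shows "frob_inner P P \<le> frob_inner M M"
proof -
  define D where "D = M - P"
  have D: "D \<in> carrier_mat n m" using M P D_def by auto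
  have "M = P + D" using M P D_def by auto
  then have "frob_inner M M = frob_inner P P + 2 * frob_inner P D + frob_inner D D"
    using P D by (simp add: frob_inner_add_left[of _ n m] frob_inner_add_right[of _ n m]
        frob_inner_commute[of D n m P])
  then show ?thesis using orth frob_inner_self_nonneg[of D] D_def by simp
qed

lemma frob_inner_self_le_of_le_frob_inner:
  assumes S: "S \<in> carrier_mat n m" and G: "G \<in> carrier_mat n m"
    and le: "frob_inner S S \<le> frob_inner S G"
  shows "frob_inner S S \<le> frob_inner G G"
proof -
  have "0 \<le> frob_inner (S - G) (S - G)" by (rule frob_inner_self_nonneg)
  also have "\<dots> = frob_inner S S - 2 * frob_inner S G + frob_inner G G"
  proof -
    have SG: "S - G \<in> carrier_mat n m" using G by (rule minus_carrier_mat)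
    have "frob_inner (S - G) (S - G) = frob_inner S (S - G) - frob_inner G (S - G)"
      by (rule frob_inner_minus_left[OF SG S G])
    also have "\<dots> = frob_inner S S - frob_inner S G - (frob_inner G S - frob_inner G G)"
      using S G by (simp add: frob_inner_minus_right[of _ n m])
    finally show ?thesis using frob_inner_commute[OF G S] by simp
  qed
  finally show ?thesis using le by linarith
qed

lemma orthonormal_cols_carrier: "orthonormal_cols n k Q \<Longrightarrow> Q \<in> carrier_mat n k"
  unfolding orthonormal_cols_def by auto

lemma orthonormal_cols_transpose_mult: "orthonormal_cols n k Q \<Longrightarrow> Q\<^sup>T * Q = 1\<^sub>m k"
  unfolding orthonormal_cols_def by auto

lemma orthonormal_cols_mult:
  assumes Q1: "orthonormal_cols n k Q1" and Q2: "orthonormal_cols k j Q2"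
  shows "orthonormal_cols n j (Q1 * Q2)"
proof -
  have c1: "Q1 \<in> carrier_mat n k" and c2: "Q2 \<in> carrier_mat k j"
    using Q1 Q2 orthonormal_cols_carrier by auto
  have "(Q1 * Q2)\<^sup>T * (Q1 * Q2) = Q2\<^sup>T * (Q1\<^sup>T * (Q1 * Q2))"
    using c1 c2 by (simp add: transpose_mult) (intro assoc_mult_mat, auto)
  also have "Q1\<^sup>T * (Q1 * Q2) = (Q1\<^sup>T * Q1) * Q2"
    using c1 c2 by (intro assoc_mult_mat[symmetric]) auto
  also have "Q2\<^sup>T * ((Q1\<^sup>T * Q1) * Q2) = Q2\<^sup>T * Q2"
    using c2 orthonormal_cols_transpose_mult[OF Q1] by simp
  also have "\<dots> = 1\<^sub>m j" using orthonormal_cols_transpose_mult[OF Q2] .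
  finally show ?thesis using c1 c2 unfolding orthonormal_cols_def by auto
qed

lemma orthonormal_cols_first_cols:
  assumes Q: "orthonormal_cols n k Q" and j: "j \<le> k"
  shows "orthonormal_cols n j (first_cols j Q)"
proof -
  have c: "Q \<in> carrier_mat n k" using Q orthonormal_cols_carrier by auto
  have entry: "(Q\<^sup>T * Q) $$ (a,b) = (1\<^sub>m k) $$ (a,b)" if "a < k" "b < k" for a b
    using orthonormal_cols_transpose_mult[OF Q] by simp
  have "(first_cols j Q)\<^sup>T * first_cols j Q = 1\<^sub>m j"
  proof (rule eq_matI)
    fix a b assume "a < dim_row (1\<^sub>m j)" "b < dim_col (1\<^sub>m j)"
    then show "((first_cols j Q)\<^sup>T * first_cols j Q) $$ (a, b) = 1\<^sub>m j $$ (a, b)"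
      using entry[of a b] j c by (auto simp: first_cols_def scalar_prod_def)
  qed (auto simp: first_cols_def)
  then show ?thesis using c unfolding orthonormal_cols_def first_cols_def by auto
qed

lemma frob_inner_self_orthonormal_mult_left:
  assumes Q: "orthonormal_cols n k Q" and M: "M \<in> carrier_mat k m"
  shows "frob_inner (Q * M) (Q * M) = frob_inner M M"
proof -
  have c: "Q \<in> carrier_mat n k" using Q orthonormal_cols_carrier by auto
  have "frob_inner (Q * M) (Q * M) = frob_inner M (Q\<^sup>T * (Q * M))"
    using c M by (intro frob_inner_mult_left) auto
  also have "Q\<^sup>T * (Q * M) = (Q\<^sup>T * Q) * M" using c M by (subst assoc_mult_mat) auto
  also have "\<dots> = M" using M orthonormal_cols_transpose_mult[OF Q] by simp
  finally show ?thesis .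
qed

lemma frob_inner_self_mult_orthonormal_transpose:
  assumes W: "orthonormal_cols m k W" and M: "M \<in> carrier_mat n k"
  shows "frob_inner (M * W\<^sup>T) (M * W\<^sup>T) = frob_inner M M"
proof -
  have c: "W \<in> carrier_mat m k" using W orthonormal_cols_carrier by auto
  have "frob_inner (M * W\<^sup>T) (M * W\<^sup>T) = frob_inner M ((M * W\<^sup>T) * W\<^sup>T\<^sup>T)"
    using c M by (intro frob_inner_mult_right) auto
  also have "(M * W\<^sup>T) * W\<^sup>T\<^sup>T = M * (W\<^sup>T * W)" using c M by (subst assoc_mult_mat) auto
  also have "\<dots> = M" using M orthonormal_cols_transpose_mult[OF W] by simp
  finally show ?thesis .
qed

lemma frob_inner_self_orthonormal_sandwich:
  assumes U: "orthonormal_cols n k U" and V: "orthonormal_cols m l V" and S: "S \<in> carrier_mat k l"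
  shows "frob_inner (U * S * V\<^sup>T) (U * S * V\<^sup>T) = frob_inner S S"
proof -
  have US: "U * S \<in> carrier_mat n l" by (rule mult_carrier_mat[OF orthonormal_cols_carrier[OF U] S])
  have "frob_inner (U * S * V\<^sup>T) (U * S * V\<^sup>T) = frob_inner (U * S) (U * S)"
    by (rule frob_inner_self_mult_orthonormal_transpose[OF V US])
  also have "\<dots> = frob_inner S S" by (rule frob_inner_self_orthonormal_mult_left[OF U S])
  finally show ?thesis .
qed

text \<open>Orthogonal projection onto the column space of \<open>Q\<close>: \<open>Q Q\<^sup>T M\<close> is orthogonal to \<open>M - Q Q\<^sup>T M\<close>.\<close>

lemma frob_inner_self_orthonormal_transpose_mult_le:
  assumes Q: "orthonormal_cols n k Q" and M: "M \<in> carrier_mat n m"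
  shows "frob_inner (Q\<^sup>T * M) (Q\<^sup>T * M) \<le> frob_inner M M"
proof -
  have c: "Q \<in> carrier_mat n k" using Q orthonormal_cols_carrier by auto
  have QM: "Q\<^sup>T * M \<in> carrier_mat k m" using c M by simp
  define P where "P = Q * (Q\<^sup>T * M)"
  have P: "P \<in> carrier_mat n m" using c M P_def by auto
  have MP: "M - P \<in> carrier_mat n m" using P by (rule minus_carrier_mat)
  have "frob_inner P (M - P) = frob_inner (Q\<^sup>T * M) (Q\<^sup>T * (M - P))"
    using frob_inner_mult_left[OF c QM MP] unfolding P_def .
  also have "Q\<^sup>T * (M - P) = Q\<^sup>T * M - (Q\<^sup>T * Q) * (Q\<^sup>T * M)"
    using c M P unfolding P_def
    by (simp add: mult_minus_distrib_mat[of _ k n] assoc_mult_mat[of "Q\<^sup>T" k n Q k "Q\<^sup>T * M" m, symmetric])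
  also have "\<dots> = 0\<^sub>m k m"
    using QM by (simp add: orthonormal_cols_transpose_mult[OF Q] left_mult_one_mat)
  also have "frob_inner (Q\<^sup>T * M) (0\<^sub>m k m) = 0" by (rule frob_inner_zero_right[OF QM])
  finally have "frob_inner P P \<le> frob_inner M M"
    by (rule frob_inner_self_le_of_orthogonal_diff[OF P M])
  also have "frob_inner P P = frob_inner (Q\<^sup>T * M) (Q\<^sup>T * M)"
    unfolding P_def by (rule frob_inner_self_orthonormal_mult_left[OF Q QM])
  finally show ?thesis .
qed

lemma frob_inner_self_mult_orthonormal_le:
  assumes W: "orthonormal_cols m k W" and M: "M \<in> carrier_mat n m"
  shows "frob_inner (M * W) (M * W) \<le> frob_inner M M"
proof -
  have c: "W \<in> carrier_mat m k" by (rule orthonormal_cols_carrier[OF W])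
  have MW: "M * W \<in> carrier_mat n k" by (rule mult_carrier_mat[OF M c])
  have MT: "M\<^sup>T \<in> carrier_mat m n" using M by simp
  have "frob_inner (M * W) (M * W) = frob_inner (M * W)\<^sup>T (M * W)\<^sup>T"
    by (rule frob_inner_transpose[OF MW MW, symmetric])
  also have "(M * W)\<^sup>T = W\<^sup>T * M\<^sup>T" by (rule transpose_mult[OF M c])
  also have "frob_inner (W\<^sup>T * M\<^sup>T) (W\<^sup>T * M\<^sup>T) \<le> frob_inner M\<^sup>T M\<^sup>T"
    by (rule frob_inner_self_orthonormal_transpose_mult_le[OF W MT])
  also have "\<dots> = frob_inner M M" by (rule frob_inner_transpose[OF M M])
  finally show ?thesis .
qed

lemma neg_semidef_carrier: "neg_semidef n A \<Longrightarrow> A \<in> carrier_mat n n"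
  unfolding neg_semidef_def by auto

lemma neg_semidef_congruence:
  assumes F: "neg_semidef n F" and V: "V \<in> carrier_mat n k"
  shows "neg_semidef k (V\<^sup>T * F * V)"
  unfolding neg_semidef_def
proof (intro conjI ballI)
  have Fc: "F \<in> carrier_mat n n" by (rule neg_semidef_carrier[OF F])
  show "V\<^sup>T * F * V \<in> carrier_mat k k" using Fc V by auto
  fix v :: "real vec" assume v: "v \<in> carrier_vec k"
  have Vv: "V *\<^sub>v v \<in> carrier_vec n" using V v by simp
  have "(V\<^sup>T * F * V) *\<^sub>v v = (V\<^sup>T * F) *\<^sub>v (V *\<^sub>v v)"
    using Fc V v by (intro assoc_mult_mat_vec[of _ k n]) auto
  also have "\<dots> = V\<^sup>T *\<^sub>v (F *\<^sub>v (V *\<^sub>v v))"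
    using Fc V v by (intro assoc_mult_mat_vec[of _ k n _ n]) auto
  finally have "(V\<^sup>T * F * V) *\<^sub>v v = V\<^sup>T *\<^sub>v (F *\<^sub>v (V *\<^sub>v v))" .
  then have "v \<bullet> ((V\<^sup>T * F * V) *\<^sub>v v) = (V\<^sup>T *\<^sub>v (F *\<^sub>v (V *\<^sub>v v))) \<bullet> v"
    using Fc V v by (simp add: comm_scalar_prod[of _ k])
  also have "\<dots> = (F *\<^sub>v (V *\<^sub>v v)) \<bullet> (V *\<^sub>v v)"
    using Fc V v by (intro transpose_vec_mult_scalar) auto
  also have "\<dots> = (V *\<^sub>v v) \<bullet> (F *\<^sub>v (V *\<^sub>v v))"
    using Fc Vv by (simp add: comm_scalar_prod[of _ n])
  also have "\<dots> \<le> 0" using F Vv unfolding neg_semidef_def by blast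
  finally show "v \<bullet> ((V\<^sup>T * F * V) *\<^sub>v v) \<le> 0" .
qed

lemma neg_semidef_transpose:
  assumes A: "neg_semidef n A"
  shows "neg_semidef n A\<^sup>T"
  unfolding neg_semidef_def
proof (intro conjI ballI)
  have Ac: "A \<in> carrier_mat n n" by (rule neg_semidef_carrier[OF A])
  show "A\<^sup>T \<in> carrier_mat n n" using Ac by simp
  fix v :: "real vec" assume v: "v \<in> carrier_vec n"
  have "v \<bullet> (A\<^sup>T *\<^sub>v v) = (A\<^sup>T *\<^sub>v v) \<bullet> v" using Ac v by (simp add: comm_scalar_prod[of _ n])
  also have "\<dots> = v \<bullet> (A *\<^sub>v v)" using Ac v by (intro transpose_vec_mult_scalar) auto
  also have "\<dots> \<le> 0" using A v unfolding neg_semidef_def by blast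
  finally show "v \<bullet> (A\<^sup>T *\<^sub>v v) \<le> 0" .
qed

lemma frob_inner_neg_semidef_mult_nonpos:
  assumes A: "neg_semidef k A" and S: "S \<in> carrier_mat k m"
  shows "frob_inner S (A * S) \<le> 0"
proof -
  have Ac: "A \<in> carrier_mat k k" by (rule neg_semidef_carrier[OF A])
  have "frob_inner S (A * S) = (\<Sum>j<m. col S j \<bullet> col (A * S) j)"
    using Ac S by (intro frob_inner_eq_sum_col) auto
  also have "\<dots> = (\<Sum>j<m. col S j \<bullet> (A *\<^sub>v col S j))"
  proof (intro sum.cong refl)
    fix j assume "j \<in> {..<m}"
    then have "col (A * S) j = A *\<^sub>v col S j" using Ac S by (intro col_mult2) auto
    then show "col S j \<bullet> col (A * S) j = col S j \<bullet> (A *\<^sub>v col S j)" by simp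
  qed
  also have "\<dots> \<le> 0" using A S unfolding neg_semidef_def by (intro sum_nonpos) auto
  finally show ?thesis .
qed

lemma frob_inner_mult_neg_semidef_nonpos:
  assumes A: "neg_semidef m A" and S: "S \<in> carrier_mat k m"
  shows "frob_inner S (S * A) \<le> 0"
proof -
  have Ac: "A \<in> carrier_mat m m" by (rule neg_semidef_carrier[OF A])
  have SA: "S * A \<in> carrier_mat k m" by (rule mult_carrier_mat[OF S Ac])
  have "frob_inner S (S * A) = frob_inner S\<^sup>T (S * A)\<^sup>T"
    by (rule frob_inner_transpose[OF S SA, symmetric])
  also have "(S * A)\<^sup>T = A\<^sup>T * S\<^sup>T" by (rule transpose_mult[OF S Ac])
  also have "frob_inner S\<^sup>T (A\<^sup>T * S\<^sup>T) \<le> 0"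
    by (rule frob_inner_neg_semidef_mult_nonpos[OF neg_semidef_transpose[OF A]]) (use S in simp)
  finally show ?thesis .
qed

lemma backward_euler_sylvester_frob_inner_le:
  assumes S: "S \<in> carrier_mat k m" and Ax: "neg_semidef k Ax" and Ay: "neg_semidef m Ay"
    and dt: "dt \<ge> 0"
    and eq: "(1\<^sub>m k - dt \<cdot>\<^sub>m Ax) * S - S * (dt \<cdot>\<^sub>m Ay) = G"
  shows "frob_inner S S \<le> frob_inner G G"
proof -
  have Axc: "Ax \<in> carrier_mat k k" by (rule neg_semidef_carrier[OF Ax])
  have Ayc: "Ay \<in> carrier_mat m m" by (rule neg_semidef_carrier[OF Ay])
  have AxS: "Ax * S \<in> carrier_mat k m" by (rule mult_carrier_mat[OF Axc S])
  have SAy: "S * Ay \<in> carrier_mat k m" by (rule mult_carrier_mat[OF S Ayc])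
  have "(1\<^sub>m k - dt \<cdot>\<^sub>m Ax) * S = S - dt \<cdot>\<^sub>m (Ax * S)"
    using Axc S by (simp add: minus_mult_distrib_mat[of _ k k] mult_smult_assoc_mat)
  moreover have "S * (dt \<cdot>\<^sub>m Ay) = dt \<cdot>\<^sub>m (S * Ay)" using S Ayc by (rule mult_smult_distrib)
  ultimately have G: "G = (S - dt \<cdot>\<^sub>m (Ax * S)) - dt \<cdot>\<^sub>m (S * Ay)" using eq by simp
  have dtAxS: "dt \<cdot>\<^sub>m (Ax * S) \<in> carrier_mat k m" using AxS by (rule smult_carrier_mat)
  have dtSAy: "dt \<cdot>\<^sub>m (S * Ay) \<in> carrier_mat k m" using SAy by (rule smult_carrier_mat)
  have SAxS: "S - dt \<cdot>\<^sub>m (Ax * S) \<in> carrier_mat k m" using dtAxS by (rule minus_carrier_mat)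
  have "frob_inner S G = frob_inner S (S - dt \<cdot>\<^sub>m (Ax * S)) - frob_inner S (dt \<cdot>\<^sub>m (S * Ay))"
    unfolding G by (rule frob_inner_minus_right[OF S SAxS dtSAy])
  also have "\<dots> = frob_inner S S - dt * frob_inner S (Ax * S) - dt * frob_inner S (S * Ay)"
    by (simp only: frob_inner_minus_right[OF S S dtAxS] frob_inner_smult_right[OF S AxS]
        frob_inner_smult_right[OF S SAy])
  finally have "frob_inner S G = \<dots>" .
  moreover have "dt * frob_inner S (Ax * S) \<le> 0"
    using dt frob_inner_neg_semidef_mult_nonpos[OF Ax S] by (rule mult_nonneg_nonpos)
  moreover have "dt * frob_inner S (S * Ay) \<le> 0"
    using dt frob_inner_mult_neg_semidef_nonpos[OF Ay S] by (rule mult_nonneg_nonpos)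
  ultimately have "frob_inner S S \<le> frob_inner S G" by linarith
  moreover have "G \<in> carrier_mat k m" unfolding G using dtSAy by (rule minus_carrier_mat)
  ultimately show ?thesis using S by (intro frob_inner_self_le_of_le_frob_inner) auto
qed

lemma frob_inner_self_lead_block_le:
  assumes Sig: "Sig \<in> carrier_mat k l" and r: "r \<le> min k l"
  shows "frob_inner (lead_block r Sig) (lead_block r Sig) \<le> frob_inner Sig Sig"
proof -
  have "frob_inner (lead_block r Sig) (lead_block r Sig) = (\<Sum>i<r. \<Sum>j<r. Sig $$ (i,j) * Sig $$ (i,j))"
    unfolding frob_inner_def lead_block_def by simp
  also have "\<dots> \<le> (\<Sum>i<r. \<Sum>j<l. Sig $$ (i,j) * Sig $$ (i,j))"
    using r by (intro sum_mono sum_mono2) auto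
  also have "\<dots> \<le> (\<Sum>i<k. \<Sum>j<l. Sig $$ (i,j) * Sig $$ (i,j))"
    using r by (intro sum_mono2) (auto intro: sum_nonneg)
  also have "\<dots> = frob_inner Sig Sig" unfolding frob_inner_def using Sig by simp
  finally show ?thesis .
qed

lemma frob_norm_le_of_frob_inner_le:
  "frob_inner X X \<le> frob_inner Y Y \<Longrightarrow> frob_norm X \<le> frob_norm Y"
  unfolding frob_norm_eq_sqrt_frob_inner by (rule real_sqrt_le_mono)

lemma reduced_qrD:
  assumes "reduced_qr M Q R" "M \<in> carrier_mat n m"
  shows "orthonormal_cols n (min n m) Q" "R \<in> carrier_mat (min n m) m"
  using assms unfolding reduced_qr_def Let_def by auto

lemma is_svdD:
  assumes "is_svd S P Sig W" "S \<in> carrier_mat n m"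
  shows "orthonormal_cols n n P" "orthonormal_cols m m W" "Sig \<in> carrier_mat n m"
    "S = P * Sig * W\<^sup>T"
  using assms unfolding is_svd_def Let_def by auto

lemma append_cols_carrier:
  "A \<in> carrier_mat n a \<Longrightarrow> B \<in> carrier_mat n b \<Longrightarrow> append_cols A B \<in> carrier_mat n (a + b)"
  unfolding append_cols_def by auto

lemma num_sv_above_le: "num_sv_above t Sig \<le> min (dim_row Sig) (dim_col Sig)"
proof -
  have "num_sv_above t Sig \<le> card {..<min (dim_row Sig) (dim_col Sig)}"
    unfolding num_sv_above_def by (intro card_mono) auto
  then show ?thesis by simp
qed

lemma qr_svd_num_sv_above_le:
  assumes qr: "reduced_qr M Q R" and svd: "is_svd R P Sig W" and M: "M \<in> carrier_mat n m"
  shows "num_sv_above t Sig \<le> min n m"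
proof -
  have "Sig \<in> carrier_mat (min n m) m" using is_svdD(3)[OF svd reduced_qrD(2)[OF qr M]] .
  then show ?thesis using num_sv_above_le[of t Sig] by auto
qed

lemma qr_svd_basis_orthonormal:
  assumes qr: "reduced_qr M Q R" and svd: "is_svd R P Sig W" and M: "M \<in> carrier_mat n m"
    and j: "j \<le> min n m"
  shows "orthonormal_cols n j (Q * first_cols j P)"
  using reduced_qrD(1)[OF qr M]
    orthonormal_cols_first_cols[OF is_svdD(1)[OF svd reduced_qrD(2)[OF qr M]] j]
  by (rule orthonormal_cols_mult)

lemma galerkin_backward_euler_frob_norm_le:
  assumes Vx: "orthonormal_cols n k Vx" and Vy: "orthonormal_cols m l Vy"
    and Fx: "neg_semidef n Fx" and Fy: "neg_semidef m Fy" and Fy_sym: "symmetric_mat Fy"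
    and dt: "dt \<ge> 0" and U: "U \<in> carrier_mat n m" and S: "S \<in> carrier_mat k l"
    and eq: "(1\<^sub>m k - dt \<cdot>\<^sub>m (Vx\<^sup>T * Fx * Vx)) * S - S * (dt \<cdot>\<^sub>m ((Fy * Vy)\<^sup>T * Vy))
             = Vx\<^sup>T * U * Vy"
  shows "frob_norm S \<le> frob_norm U"
proof -
  have Vxc: "Vx \<in> carrier_mat n k" by (rule orthonormal_cols_carrier[OF Vx])
  have Vyc: "Vy \<in> carrier_mat m l" by (rule orthonormal_cols_carrier[OF Vy])
  have "(Fy * Vy)\<^sup>T = Vy\<^sup>T * Fy\<^sup>T" by (rule transpose_mult[OF neg_semidef_carrier[OF Fy] Vyc])
  then have "(Fy * Vy)\<^sup>T * Vy = Vy\<^sup>T * Fy * Vy" using Fy_sym unfolding symmetric_mat_def by simp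
  then have "frob_inner S S \<le> frob_inner (Vx\<^sup>T * U * Vy) (Vx\<^sup>T * U * Vy)"
    using S dt eq neg_semidef_congruence[OF Fx Vxc] neg_semidef_congruence[OF Fy Vyc]
    by (intro backward_euler_sylvester_frob_inner_le) auto
  also have "\<dots> \<le> frob_inner (Vx\<^sup>T * U) (Vx\<^sup>T * U)"
    using Vxc U by (intro frob_inner_self_mult_orthonormal_le[OF Vy]) auto
  also have "\<dots> \<le> frob_inner U U" by (rule frob_inner_self_orthonormal_transpose_mult_le[OF Vx U])
  finally show ?thesis by (rule frob_norm_le_of_frob_inner_le)
qed

lemma truncated_svd_frob_norm_le:
  assumes svd: "is_svd S A Sig B" and S: "S \<in> carrier_mat k l"
    and Vx: "orthonormal_cols n k Vx" and Vy: "orthonormal_cols m l Vy" and r: "r \<le> min k l"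
  shows "frob_norm ((Vx * first_cols r A) * lead_block r Sig * (Vy * first_cols r B)\<^sup>T) \<le> frob_norm S"
proof -
  note A = is_svdD(1)[OF svd S] and B = is_svdD(2)[OF svd S]
    and Sig = is_svdD(3)[OF svd S] and S_eq = is_svdD(4)[OF svd S]
  have VxA: "orthonormal_cols n r (Vx * first_cols r A)"
    using r by (intro orthonormal_cols_mult[OF Vx] orthonormal_cols_first_cols[OF A]) auto
  have VyB: "orthonormal_cols m r (Vy * first_cols r B)"
    using r by (intro orthonormal_cols_mult[OF Vy] orthonormal_cols_first_cols[OF B]) auto
  have "frob_inner ((Vx * first_cols r A) * lead_block r Sig * (Vy * first_cols r B)\<^sup>T)
      ((Vx * first_cols r A) * lead_block r Sig * (Vy * first_cols r B)\<^sup>T)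
      = frob_inner (lead_block r Sig) (lead_block r Sig)"
    by (rule frob_inner_self_orthonormal_sandwich[OF VxA VyB]) (simp add: lead_block_def)
  also have "\<dots> \<le> frob_inner Sig Sig" by (rule frob_inner_self_lead_block_le[OF Sig r])
  also have "\<dots> = frob_inner S S"
    unfolding S_eq by (rule frob_inner_self_orthonormal_sandwich[OF A B Sig, symmetric])
  finally show ?thesis by (rule frob_norm_le_of_frob_inner_le)
qed

theorem mainTheorem1:
  fixes N r :: nat and dt eps :: real
    and Fx Fy Vxn Vyn Sn :: "real mat"
    and K L Vxd Vyd R R' :: "real mat"
    and Qx Rx Qy Ry Px Sigx Wx Py Sigy Wy :: "real mat"
    and rhat :: nat and Vhx Vhy Shat A Sig B :: "real mat"
    and r1 :: nat and Vx1 S1 Vy1 :: "real mat"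
  assumes Fx_sym: "symmetric_mat Fx" and Fx_nsd: "neg_semidef N Fx"
    and Fy_sym: "symmetric_mat Fy" and Fy_nsd: "neg_semidef N Fy"
    and dt_pos: "dt > 0" and eps_pos: "eps > 0"
    and Vxn: "orthonormal_cols N r Vxn" and Vyn: "orthonormal_cols N r Vyn"
    and Sn: "Sn \<in> carrier_mat r r"
    \<comment> \<open>(1) K and L steps\<close>
    and K: "K \<in> carrier_mat N r"
    and K_eq: "(1\<^sub>m N - dt \<cdot>\<^sub>m Fx) * K - K * (dt \<cdot>\<^sub>m ((Fy * Vyn)\<^sup>T * Vyn)) = Vxn * Sn"
    and L: "L \<in> carrier_mat N r"
    and L_eq: "(1\<^sub>m N - dt \<cdot>\<^sub>m Fy) * L - L * (dt \<cdot>\<^sub>m ((Fx * Vxn)\<^sup>T * Vxn)) = Vyn * Sn\<^sup>T"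
    and K_qr: "reduced_qr K Vxd R" and L_qr: "reduced_qr L Vyd R'"
    \<comment> \<open>(2) reduced augmentation\<close>
    and x_qr: "reduced_qr (append_cols Vxd Vxn) Qx Rx"
    and y_qr: "reduced_qr (append_cols Vyd Vyn) Qy Ry"
    and x_svd: "is_svd Rx Px Sigx Wx" and y_svd: "is_svd Ry Py Sigy Wy"
    and rhat_def: "rhat = max (num_sv_above (10 powi (-12)) Sigx) (num_sv_above (10 powi (-12)) Sigy)"
    and Vhx_def: "Vhx = Qx * first_cols rhat Px"
    and Vhy_def: "Vhy = Qy * first_cols rhat Py"
    \<comment> \<open>(3) S step\<close>
    and Shat: "Shat \<in> carrier_mat rhat rhat"
    and Shat_eq: "(1\<^sub>m rhat - dt \<cdot>\<^sub>m (Vhx\<^sup>T * Fx * Vhx)) * Shat - Shat * (dt \<cdot>\<^sub>m ((Fy * Vhy)\<^sup>T * Vhy))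
                  = Vhx\<^sup>T * Vxn * Sn * Vyn\<^sup>T * Vhy"
    \<comment> \<open>(4) truncation\<close>
    and S_svd: "is_svd Shat A Sig B"
    and r1_def: "r1 = num_sv_above eps Sig"
    and Vx1_def: "Vx1 = Vhx * first_cols r1 A"
    and S1_def: "S1 = lead_block r1 Sig"
    and Vy1_def: "Vy1 = Vhy * first_cols r1 B"
  shows "frob_norm (Vx1 * S1 * Vy1\<^sup>T) \<le> frob_norm (Vxn * Sn * Vyn\<^sup>T)"
proof -
  have Vxnc: "Vxn \<in> carrier_mat N r" by (rule orthonormal_cols_carrier[OF Vxn])
  have Vync: "Vyn \<in> carrier_mat N r" by (rule orthonormal_cols_carrier[OF Vyn])
  have Vxd: "Vxd \<in> carrier_mat N (min N r)"
    by (rule orthonormal_cols_carrier[OF reduced_qrD(1)[OF K_qr K]])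
  have Vyd: "Vyd \<in> carrier_mat N (min N r)"
    by (rule orthonormal_cols_carrier[OF reduced_qrD(1)[OF L_qr L]])
  have Mx: "append_cols Vxd Vxn \<in> carrier_mat N (min N r + r)"
    by (rule append_cols_carrier[OF Vxd Vxnc])
  have My: "append_cols Vyd Vyn \<in> carrier_mat N (min N r + r)"
    by (rule append_cols_carrier[OF Vyd Vync])
  have rhat_le: "rhat \<le> min N (min N r + r)"
    unfolding rhat_def using qr_svd_num_sv_above_le[OF x_qr x_svd Mx] qr_svd_num_sv_above_le[OF y_qr y_svd My]
    by simp
  have Vhx: "orthonormal_cols N rhat Vhx"
    unfolding Vhx_def by (rule qr_svd_basis_orthonormal[OF x_qr x_svd Mx rhat_le])
  have Vhy: "orthonormal_cols N rhat Vhy"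
    unfolding Vhy_def by (rule qr_svd_basis_orthonormal[OF y_qr y_svd My rhat_le])
  define U where "U = Vxn * Sn * Vyn\<^sup>T"
  have U: "U \<in> carrier_mat N N" unfolding U_def using Vxnc Vync Sn by simp
  have Vhxc: "Vhx \<in> carrier_mat N rhat" by (rule orthonormal_cols_carrier[OF Vhx])
  have "Vhx\<^sup>T * Vxn * Sn = Vhx\<^sup>T * (Vxn * Sn)" using Vhxc Vxnc Sn by (intro assoc_mult_mat) auto
  moreover have "Vhx\<^sup>T * (Vxn * Sn) * Vyn\<^sup>T = Vhx\<^sup>T * U"
    unfolding U_def using Vhxc Vxnc Sn Vync by (intro assoc_mult_mat[of _ rhat N _ r _ N]) auto
  ultimately have "Vhx\<^sup>T * Vxn * Sn * Vyn\<^sup>T * Vhy = Vhx\<^sup>T * U * Vhy" by simp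
  then have Shat_le: "frob_norm Shat \<le> frob_norm U"
    using Shat_eq dt_pos by (intro galerkin_backward_euler_frob_norm_le[OF Vhx Vhy Fx_nsd Fy_nsd Fy_sym _ U Shat]) auto
  have "r1 \<le> min rhat rhat"
    unfolding r1_def using num_sv_above_le[of eps Sig] is_svdD(3)[OF S_svd Shat] by simp
  then have "frob_norm (Vx1 * S1 * Vy1\<^sup>T) \<le> frob_norm Shat"
    unfolding Vx1_def S1_def Vy1_def by (rule truncated_svd_frob_norm_le[OF S_svd Shat Vhx Vhy])
  then show ?thesis using Shat_le unfolding U_def by linarith
qed

end
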